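(* Assume hypothesis (A). For every $i\in\{1,\dots,d\}$ and $s\in(-1,+\infty)$, the system of equations $$e^{\alpha^i}=1+s,\qquad e^{\alpha^j}=\sum_{k=1}^dp_{jk}e^{\alpha^k}+p_{j0},\quad j\in\{1,\dots,d\}\setminus\{i\},$$ in $\alpha=(\alpha^1,\dots,\alpha^d)\in\mathbb{R}^d$ has a unique solution $\alpha(s)$, given by $\alpha^i(s)=\log(1+s)$ and $\alpha^j(s)=\log(1+Q_{ji}s)$ for $j\ne i$. Moreover, for every $\Lambda\subset\{1,\dots,d\}$, $$R_\Lambda(\alpha(s))=\frac{s}{G_{ii}}\Bigl(\nu_i-\frac{\mu_i}{1+s}\mathbf{1}_\Lambda(i)\Bigr).$$
   Context: Jackson network with $d$ queues: arrival rates $\lambda_i\ge0$, service rates $\mu_i>0$, routing matrix $P=(p_{ij})_{i,j=1}^d$ nonnegative with $p_{ii}=0$, $\sum_jp_{ij}\le1$, $p_{i0}=1-\sum_jp_{ij}$. Hypothesis (A): the jump-rate kernel on $\mathbb{Z}^d$ (jumps $+\epsilon^i$ at rate $\lambda_i$, $-\epsilon^i$ at rate $\mu_ip_{i0}$, $\epsilon^j-\epsilon^i$ at rate $\mu_ip_{ij}$) is irreducible (equivalently spectral radius of $P$ $<1$ and for every $i$ some $\lambda_jp^{(n)}_{ji}>0$); then the traffic equations $\nu_j=\lambda_j+\sum_i\nu_ip_{ij}$ have a unique solution. $G=(I-P)^{-1}$. $Q_{ij}$: probability that the chain on $\{0,\dots,d\}$ with transitions $p_{ij}$ ($0$ absorbing)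 started at $i$ ever visits $j$ (time $0$ included). For $\Lambda\subset\{1,\dots,d\}$ and $\alpha\in\mathbb{R}^d$, $$R_\Lambda(\alpha)=\sum_{j=1}^d\lambda_j(e^{\alpha^j}-1)+\sum_{j\in\Lambda}\mu_j\Bigl(\sum_{k=1}^dp_{jk}e^{\alpha^k-\alpha^j}+p_{j0}e^{-\alpha^j}-1\Bigr).$$ *)

theory Defs
  imports "HOL-Analysis.Analysis"
begin

text \<open>Jackson network with queues indexed by a finite type 'n (d = CARD('n)).
  Routing matrix P :: real^'n^'n, p_ij = P$i$j; exit probability p_i0 below.\<close>

definition p0 :: "real^'n^'n \<Rightarrow> 'n::finite \<Rightarrow> real" where
  "p0 P i = 1 - (\<Sum>j\<in>UNIV. P$i$j)"

definition unitv :: "'n::finite \<Rightarrow> int^'n" where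
  "unitv i = (\<chi> k. if k = i then 1 else 0)"

definition pos_jumps :: "real^'n \<Rightarrow> real^'n \<Rightarrow> real^'n^'n \<Rightarrow> (int^'n::finite) set" where
  "pos_jumps lam mu P =
     {unitv i | i. lam$i > 0}
   \<union> {- unitv i | i. mu$i * p0 P i > 0}
   \<union> {unitv j - unitv i | i j. mu$i * P$i$j > 0}"

definition hypA :: "real^'n \<Rightarrow> real^'n \<Rightarrow> real^'n^'n \<Rightarrow> bool" where
  "hypA lam mu P \<longleftrightarrow>
     (\<forall>x y :: int^'n::finite. (x, y) \<in> {(u, u + v) | u v. v \<in> pos_jumps lam mu P}\<^sup>*)"

definition traffic :: "real^'n \<Rightarrow> real^'n \<Rightarrow> real^'n^'n::finite \<Rightarrow> bool" where
  "traffic nu lam P \<longleftrightarrow> (\<forall>j. nu$j = lam$j + (\<Sum>i\<in>UNIV. nu$i * P$i$j))"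

definition Gmat :: "real^'n^'n \<Rightarrow> real^'n^'n::finite" where
  "Gmat P = matrix_inv (mat 1 - P)"

text \<open>First-passage probabilities of the chain on {0,...,d} (0 absorbing) into j:
  first_pass P j n i = probability that the chain started at i visits j for the
  first time at time n.  (The absorbing state 0 is never j, so it contributes 0.)\<close>
fun first_pass :: "real^'n^'n \<Rightarrow> 'n::finite \<Rightarrow> nat \<Rightarrow> 'n \<Rightarrow> real" where
  "first_pass P j 0 i = (if i = j then 1 else 0)"
| "first_pass P j (Suc n) i =
     (if i = j then 0 else (\<Sum>k\<in>UNIV. P$i$k * first_pass P j n k))"

text \<open>Q_ij: probability that the chain started at i ever visits j (time 0 included).\<close>
definition Qprob :: "real^'n^'n \<Rightarrow> 'n::finite \<Rightarrow> 'n \<Rightarrow> real" where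
  "Qprob P i j = (\<Sum>n. first_pass P j n i)"

definition RLam :: "real^'n \<Rightarrow> real^'n \<Rightarrow> real^'n^'n \<Rightarrow> 'n::finite set \<Rightarrow> real^'n \<Rightarrow> real" where
  "RLam lam mu P Lam a =
     (\<Sum>j\<in>UNIV. lam$j * (exp (a$j) - 1))
   + (\<Sum>j\<in>Lam. mu$j * ((\<Sum>k\<in>UNIV. P$j$k * exp (a$k - a$j)) + p0 P j * exp (- a$j) - 1))"

end

theory Submission
  imports Defs
begin

text \<open>Hypothesis (A) forbids a nonempty set of queues that is closed under routing and has
  no exit, because the number of customers in such a set could never decrease.  Hence a
  function that is harmonic for the substochastic matrix P outside a set F and vanishes on F
  vanishes identically (maximum principle).  Both the exponentiated system, whose solution is
  e^(alpha j) = 1 + Q_ji s, and the i-th column of G = (I - P)^(-1), which equals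
  Q_ji G_ii, are determined by this uniqueness.  Together with G_ii (1 - sum_k p_ik Q_ki) = 1
  and nu_i = sum_j lambda_j G_ji the value of R_Lambda then reduces to arithmetic.\<close>

definition closed_class :: "real^'n^'n \<Rightarrow> 'n::finite set \<Rightarrow> bool" where
  "closed_class P S \<longleftrightarrow> (\<forall>j\<in>S. p0 P j = 0 \<and> (\<forall>k. P$j$k > 0 \<longrightarrow> k \<in> S))"

lemma hypA_closed_class_empty:
  fixes lam mu :: "real^'n::finite" and P :: "real^'n^'n"
  assumes mu_pos: "\<forall>j. mu$j > 0"
    and A: "hypA lam mu P"
    and closed: "closed_class P S"
  shows "S = {}"
proof (rule ccontr)
  assume "S \<noteq> {}"
  then obtain i0 where i0: "i0 \<in> S" by blast
  define f where "f = (\<lambda>x::int^'n. \<Sum>j\<in>S. x$j)"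
  have f_unitv: "f (unitv i) = (if i \<in> S then 1 else 0)" for i
    unfolding f_def unitv_def by (simp add: sum.delta)
  have f_add: "f (u + v) = f u + f v" and f_diff: "f (u - v) = f u - f v"
    and f_neg: "f (- v) = - f v" for u v
    unfolding f_def by (simp_all add: sum.distrib sum_subtractf sum_negf)
  have f_jump: "f v \<ge> 0" if "v \<in> pos_jumps lam mu P" for v
  proof -
    from that consider (arrival) i where "v = unitv i"
      | (exit) i where "v = - unitv i" "mu$i * p0 P i > 0"
      | (route) i j where "v = unitv j - unitv i" "mu$i * P$i$j > 0"
      unfolding pos_jumps_def by blast
    then show ?thesis
    proof cases
      case arrival then show ?thesis by (simp add: f_unitv)
    next
      case (exit i)
      then have "p0 P i \<noteq> 0" using mu_pos by auto
      then have "i \<notin> S" using closed unfolding closed_class_def by auto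
      then show ?thesis using exit by (simp add: f_neg f_unitv)
    next
      case (route i j)
      then have "P$i$j > 0" using mu_pos by (simp add: zero_less_mult_iff) (meson not_less_iff_gr_or_eq)
      then show ?thesis using route closed unfolding closed_class_def by (auto simp: f_diff f_unitv)
    qed
  qed
  have f_mono: "f x \<le> f y" if "(x, y) \<in> {(u, u + v) | u v. v \<in> pos_jumps lam mu P}\<^sup>*" for x y
    using that
  proof (induction rule: rtrancl_induct)
    case (step y z)
    then obtain v where "v \<in> pos_jumps lam mu P" "z = y + v" by blast
    with step.IH f_jump[of v] show ?case by (simp add: f_add)
  qed simp
  have "f 0 \<le> f (- unitv i0)"
    using A unfolding hypA_def by (intro f_mono) blast
  then show False using i0 by (simp add: f_neg f_unitv) (simp add: f_def)
qed

lemma Qprob_self: "Qprob P i i = 1"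
proof -
  have "first_pass P i n i = (if n = 0 then 1 else 0)" for n
    by (cases n) simp_all
  then show ?thesis
    unfolding Qprob_def using sums_single[of 0 "\<lambda>_. 1::real"] by (simp add: sums_iff)
qed

lemma affine_row_sum:
  fixes P :: "real^'n^'n::finite"
  shows "(\<Sum>k\<in>UNIV. P$j$k * (1 + q k * s)) + p0 P j = 1 + s * (\<Sum>k\<in>UNIV. P$j$k * q k)"
  by (simp add: p0_def distrib_left sum.distrib sum_distrib_left algebra_simps)

lemma I_minus_P_mult_Gmat:
  fixes P :: "real^'n^'n::finite"
  assumes "invertible (mat 1 - P)"
  shows "Gmat P$j$m - (\<Sum>k\<in>UNIV. P$j$k * Gmat P$k$m) = (if j = m then 1 else 0)"
proof -
  have "(mat 1 - P) ** Gmat P = mat 1"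
    using assms unfolding Gmat_def matrix_inv_def invertible_def by (rule someI_ex[THEN conjunct1])
  then have "((mat 1 - P) ** Gmat P)$j$m = (if j = m then 1 else 0)" by (simp add: mat_def)
  then show ?thesis
    by (simp add: matrix_matrix_mult_def mat_def left_diff_distrib sum_subtractf
        if_distrib[of "\<lambda>x. x * _"] sum.delta cong: if_cong)
qed

lemma traffic_eq_Gmat:
  fixes P :: "real^'n^'n::finite"
  assumes "invertible (mat 1 - P)" and "traffic nu lam P"
  shows "nu$i = (\<Sum>j\<in>UNIV. lam$j * Gmat P$j$i)"
proof -
  define G where "G = Gmat P"
  have "lam$j = nu$j - (\<Sum>m\<in>UNIV. nu$m * P$m$j)" for j
    using assms(2) unfolding traffic_def by (metis add_diff_cancel_right')
  then have "(\<Sum>j\<in>UNIV. lam$j * G$j$i)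
      = (\<Sum>j\<in>UNIV. nu$j * G$j$i) - (\<Sum>j\<in>UNIV. \<Sum>m\<in>UNIV. nu$m * P$m$j * G$j$i)"
    by (simp add: left_diff_distrib sum_subtractf sum_distrib_right)
  also have "\<dots> = (\<Sum>m\<in>UNIV. nu$m * (G$m$i - (\<Sum>j\<in>UNIV. P$m$j * G$j$i)))"
    by (subst sum.swap) (simp add: right_diff_distrib sum_subtractf sum_distrib_left mult.assoc)
  also have "\<dots> = nu$i"
    using I_minus_P_mult_Gmat[OF assms(1)]
    by (simp add: G_def if_distrib[of "\<lambda>x. _ * x"] sum.delta cong: if_cong)
  finally show ?thesis by (simp add: G_def)
qed

lemma RLam_exp_form:
  "RLam lam mu P Lam a = (\<Sum>j\<in>UNIV. lam$j * (exp (a$j) - 1))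
     + (\<Sum>j\<in>Lam. mu$j * (((\<Sum>k\<in>UNIV. P$j$k * exp (a$k)) + p0 P j - exp (a$j)) / exp (a$j)))"
proof -
  have "(\<Sum>k\<in>UNIV. P$j$k * exp (a$k - a$j)) + p0 P j * exp (- a$j) - 1
      = ((\<Sum>k\<in>UNIV. P$j$k * exp (a$k)) + p0 P j - exp (a$j)) / exp (a$j)" for j
  proof -
    have "(\<Sum>k\<in>UNIV. P$j$k * exp (a$k - a$j)) = (\<Sum>k\<in>UNIV. P$j$k * exp (a$k)) / exp (a$j)"
      by (simp add: exp_diff sum_divide_distrib)
    then show ?thesis by (simp add: exp_minus divide_simps)
  qed
  then show ?thesis unfolding RLam_def by simp
qed

locale substochastic =
  fixes P :: "real^'n^'n::finite"
  assumes P_nonneg: "\<forall>j k. P$j$k \<ge> 0"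
    and P_sub: "\<forall>j. (\<Sum>k\<in>UNIV. P$j$k) \<le> 1"
begin

lemma first_pass_nonneg: "first_pass P i n j \<ge> 0"
  by (induction n arbitrary: j) (auto intro!: sum_nonneg mult_nonneg_nonneg simp: P_nonneg)

lemma first_pass_partial_sum_le_1:
  "(\<Sum>n<N. first_pass P i n j) \<le> 1"
proof (induction N arbitrary: j)
  case (Suc N)
  have split: "(\<Sum>n<Suc N. first_pass P i n j)
      = first_pass P i 0 j + (\<Sum>n<N. first_pass P i (Suc n) j)"
    by (rule sum.lessThan_Suc_shift)
  show ?case
  proof (cases "j = i")
    case False
    have "(\<Sum>n<Suc N. first_pass P i n j) = (\<Sum>n<N. \<Sum>k\<in>UNIV. P$j$k * first_pass P i n k)"
      using split False by simp
    also have "\<dots> = (\<Sum>k\<in>UNIV. P$j$k * (\<Sum>n<N. first_pass P i n k))"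
      by (subst sum.swap) (simp add: sum_distrib_left)
    also have "\<dots> \<le> (\<Sum>k\<in>UNIV. P$j$k)"
      by (intro sum_mono mult_right_le_one_le)
        (simp_all add: P_nonneg Suc.IH sum_nonneg first_pass_nonneg)
    finally show ?thesis using P_sub by (meson order_trans)
  qed (use split in simp)
qed simp

lemma summable_first_pass:
  "summable (\<lambda>n. first_pass P i n j)"
  by (rule summableI_nonneg_bounded[where x=1])
    (rule first_pass_nonneg, rule first_pass_partial_sum_le_1)

lemma Qprob_bounds:
  "0 \<le> Qprob P j i" "Qprob P j i \<le> 1"
  unfolding Qprob_def
  by (auto intro!: suminf_nonneg suminf_le_const summable_first_pass first_pass_nonneg
      first_pass_partial_sum_le_1)

lemma Qprob_harmonic:
  assumes "j \<noteq> i"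
  shows "Qprob P j i = (\<Sum>k\<in>UNIV. P$j$k * Qprob P k i)"
proof -
  have "Qprob P j i = (\<Sum>n. first_pass P i (Suc n) j)"
    using suminf_split_head[OF summable_first_pass[of i j]] \<open>j \<noteq> i\<close>
    unfolding Qprob_def by simp
  also have "\<dots> = (\<Sum>n. \<Sum>k\<in>UNIV. P$j$k * first_pass P i n k)" using \<open>j \<noteq> i\<close> by simp
  also have "\<dots> = (\<Sum>k\<in>UNIV. \<Sum>n. P$j$k * first_pass P i n k)"
    by (rule suminf_sum) (intro summable_mult summable_first_pass)
  also have "\<dots> = (\<Sum>k\<in>UNIV. P$j$k * Qprob P k i)"
    unfolding Qprob_def by (intro sum.cong refl suminf_mult summable_first_pass)
  finally show ?thesis .
qed

lemma one_plus_Qprob_mult_pos: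
  assumes "s > -1"
  shows "1 + Qprob P j i * s > 0"
proof (cases "s \<ge> 0")
  case False
  then have "Qprob P j i * s \<ge> 1 * s"
    using Qprob_bounds by (intro mult_right_mono_neg) auto
  then show ?thesis using \<open>s > -1\<close> by simp
qed (simp add: add_pos_nonneg Qprob_bounds(1))

lemma exp_hitting_solution:
  assumes "s > -1"
  shows "exp ((\<chi> j. if j = i then ln (1 + s) else ln (1 + Qprob P j i * s))$j)
    = 1 + Qprob P j i * s"
  using one_plus_Qprob_mult_pos[OF assms, of j i] assms by (simp add: Qprob_self)

end

locale transient_substochastic = substochastic P for P :: "real^'n^'n::finite" +
  assumes no_closed_class: "closed_class P S \<Longrightarrow> S = {}"
begin

lemma maximum_principle:
  assumes boundary: "\<forall>j\<in>F. z j = 0"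
    and harmonic: "\<forall>j. j \<notin> F \<longrightarrow> z j = (\<Sum>k\<in>UNIV. P$j$k * z k)"
  shows "z j = 0"
proof (rule ccontr)
  assume "z j \<noteq> 0"
  define M where "M = Max (range (\<lambda>j. \<bar>z j\<bar>))"
  have M_ge: "\<bar>z k\<bar> \<le> M" for k unfolding M_def by (rule Max_ge) auto
  have "M \<in> range (\<lambda>j. \<bar>z j\<bar>)" unfolding M_def by (rule Max_in) auto
  then obtain i0 where i0: "\<bar>z i0\<bar> = M" by auto
  have M_pos: "M > 0" using M_ge[of j] \<open>z j \<noteq> 0\<close> by linarith
  define S where "S = {j. \<bar>z j\<bar> = M}"
  have "closed_class P S"
    unfolding closed_class_def
  proof
    fix j assume "j \<in> S"
    then have zj: "\<bar>z j\<bar> = M" by (simp add: S_def)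
    then have "j \<notin> F" using boundary M_pos by auto
    then have "M = \<bar>\<Sum>k\<in>UNIV. P$j$k * z k\<bar>" using harmonic zj by simp
    also have "\<dots> \<le> (\<Sum>k\<in>UNIV. P$j$k * \<bar>z k\<bar>)"
      by (rule order_trans[OF sum_abs]) (simp add: abs_mult P_nonneg)
    finally have lower: "M \<le> (\<Sum>k\<in>UNIV. P$j$k * \<bar>z k\<bar>)" .
    have upper: "(\<Sum>k\<in>UNIV. P$j$k * \<bar>z k\<bar>) \<le> M * (\<Sum>k\<in>UNIV. P$j$k)"
      unfolding sum_distrib_left
      by (rule sum_mono) (simp add: mult_left_mono M_ge P_nonneg mult.commute[of M])
    have "1 \<le> (\<Sum>k\<in>UNIV. P$j$k)"
      using order_trans[OF lower upper] M_pos by (simp add: mult_le_cancel_left1)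
    then have row_sum: "(\<Sum>k\<in>UNIV. P$j$k) = 1" using P_sub by (simp add: antisym)
    have "(\<Sum>k\<in>UNIV. P$j$k * M) = M"
      using row_sum by (simp add: sum_distrib_right[symmetric])
    then have slack_0: "(\<Sum>k\<in>UNIV. P$j$k * (M - \<bar>z k\<bar>)) = 0"
      using lower upper row_sum by (simp add: sum_subtractf right_diff_distrib)
    have "P$j$k * (M - \<bar>z k\<bar>) = 0" for k
      using slack_0 sum_nonneg_eq_0_iff[of UNIV "\<lambda>k. P$j$k * (M - \<bar>z k\<bar>)"] M_ge P_nonneg by simp
    then show "p0 P j = 0 \<and> (\<forall>k. P$j$k > 0 \<longrightarrow> k \<in> S)"
      using row_sum by (simp add: p0_def S_def) (metis less_irrefl)
  qed
  with no_closed_class i0 show False unfolding S_def by blast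
qed

lemma harmonic_extension_unique:
  assumes boundary: "\<forall>j\<in>F. x j = y j"
    and x: "\<forall>j. j \<notin> F \<longrightarrow> x j = (\<Sum>k\<in>UNIV. P$j$k * x k) + c j"
    and y: "\<forall>j. j \<notin> F \<longrightarrow> y j = (\<Sum>k\<in>UNIV. P$j$k * y k) + c j"
  shows "x = y"
proof
  fix j
  have "x j - y j = 0"
  proof (rule maximum_principle[of F])
    show "\<forall>j\<in>F. x j - y j = 0" using boundary by simp
    show "\<forall>j. j \<notin> F \<longrightarrow> x j - y j = (\<Sum>k\<in>UNIV. P$j$k * (x k - y k))"
      using x y by (simp add: right_diff_distrib sum_subtractf)
  qed
  then show "x j = y j" by simp
qed

lemma invertible_I_minus_P:
  "invertible (mat 1 - P)"
proof -
  have "x = 0" if "(mat 1 - P) *v x = 0" for x :: "real^'n"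
  proof -
    have "x = P *v x" using that by (simp add: matrix_vector_mult_diff_rdistrib)
    have fixed: "x$j = (\<Sum>k\<in>UNIV. P$j$k * x$k)" for j
    proof -
      have "x$j = (P *v x)$j" using \<open>x = P *v x\<close> by metis
      also have "\<dots> = (\<Sum>k\<in>UNIV. P$j$k * x$k)" by (simp add: matrix_vector_mult_def)
      finally show ?thesis .
    qed
    have "x$j = 0" for j
      by (rule maximum_principle[of "{}"]) (use fixed in blast)+
    then show "x = 0" by (simp add: vec_eq_iff)
  qed
  then have "\<exists>B. B ** (mat 1 - P) = mat 1" by (simp add: matrix_left_invertible_ker)
  then show ?thesis by (simp add: invertible_left_inverse)
qed

lemma Gmat_column_eq_Qprob:
  "Gmat P$j$i = Qprob P j i * Gmat P$i$i"
proof -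
  define G where "G = Gmat P"
  have G_row: "G$j$i = (\<Sum>k\<in>UNIV. P$j$k * G$k$i) + 0" if "j \<noteq> i" for j
    using I_minus_P_mult_Gmat[OF invertible_I_minus_P, of j i] that by (simp add: G_def)
  have Q_row: "Qprob P j i * G$i$i = (\<Sum>k\<in>UNIV. P$j$k * (Qprob P k i * G$i$i)) + 0"
    if "j \<noteq> i" for j
    by (subst Qprob_harmonic[OF that]) (simp add: sum_distrib_right mult.assoc)
  have "(\<lambda>j. G$j$i) = (\<lambda>j. Qprob P j i * G$i$i)"
    by (rule harmonic_extension_unique[of "{i}" _ _ "\<lambda>_. 0"])
      (simp_all add: Qprob_self G_row Q_row)
  then show ?thesis by (metis G_def)
qed

lemma Gmat_diag_mult_escape_prob:
  "Gmat P$i$i * (1 - (\<Sum>k\<in>UNIV. P$i$k * Qprob P k i)) = 1"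
proof -
  have "(\<Sum>k\<in>UNIV. P$i$k * Gmat P$k$i) = (\<Sum>k\<in>UNIV. P$i$k * (Qprob P k i * Gmat P$i$i))"
    by (intro sum.cong refl arg_cong[where f="(*) _"] Gmat_column_eq_Qprob)
  also have "\<dots> = Gmat P$i$i * (\<Sum>k\<in>UNIV. P$i$k * Qprob P k i)"
    by (simp add: sum_distrib_left mult_ac)
  finally show ?thesis
    using I_minus_P_mult_Gmat[OF invertible_I_minus_P, of i i] by (simp add: right_diff_distrib)
qed

lemma hitting_system_solution_iff:
  assumes s: "s > -1"
  shows "(exp (a$i) = 1 + s \<and>
            (\<forall>j. j \<noteq> i \<longrightarrow> exp (a$j) = (\<Sum>k\<in>UNIV. P$j$k * exp (a$k)) + p0 P j))
         \<longleftrightarrow> a = (\<chi> j. if j = i then ln (1 + s) else ln (1 + Qprob P j i * s))"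
    (is "?system a \<longleftrightarrow> a = ?sol")
proof
  define e where "e j = 1 + Qprob P j i * s" for j
  have exp_sol: "exp (?sol$j) = e j" for j
    unfolding e_def by (rule exp_hitting_solution[OF s])
  have e_system: "e j = (\<Sum>k\<in>UNIV. P$j$k * e k) + p0 P j" if "j \<noteq> i" for j
    unfolding e_def affine_row_sum Qprob_harmonic[OF that] by (simp add: mult.commute)
  have "?system ?sol" unfolding exp_sol using e_system by (simp add: e_def Qprob_self)
  then show "a = ?sol \<Longrightarrow> ?system a" by simp
  assume "?system a"
  have "(\<lambda>j. exp (a$j)) = e"
  proof (rule harmonic_extension_unique[of "{i}" _ _ "p0 P"])
    show "\<forall>j\<in>{i}. exp (a$j) = e j" using \<open>?system a\<close> by (simp add: e_def Qprob_self)
    show "\<forall>j. j \<notin> {i} \<longrightarrow> exp (a$j) = (\<Sum>k\<in>UNIV. P$j$k * exp (a$k)) + p0 P j"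
      using \<open>?system a\<close> by simp
    show "\<forall>j. j \<notin> {i} \<longrightarrow> e j = (\<Sum>k\<in>UNIV. P$j$k * e k) + p0 P j"
      using e_system by blast
  qed
  then have "exp (a$j) = exp (?sol$j)" for j unfolding exp_sol by metis
  then show "a = ?sol" by (simp add: vec_eq_iff)
qed

lemma RLam_at_hitting_solution:
  assumes nu: "traffic nu lam P"
    and s: "s > -1"
  shows "RLam lam mu P Lam (\<chi> j. if j = i then ln (1 + s) else ln (1 + Qprob P j i * s))
    = s / Gmat P$i$i * (nu$i - mu$i / (1 + s) * indicator Lam i)"
proof -
  define G where "G = Gmat P$i$i"
  define r where "r = (\<Sum>k\<in>UNIV. P$i$k * Qprob P k i)"
  have G_r: "G * (1 - r) = 1"
    unfolding G_def r_def by (rule Gmat_diag_mult_escape_prob)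
  have nu_i: "nu$i = G * (\<Sum>j\<in>UNIV. lam$j * Qprob P j i)"
  proof -
    have "nu$i = (\<Sum>j\<in>UNIV. lam$j * Gmat P$j$i)"
      by (rule traffic_eq_Gmat[OF invertible_I_minus_P nu])
    also have "\<dots> = (\<Sum>j\<in>UNIV. lam$j * (Qprob P j i * G))"
      unfolding G_def
      by (intro sum.cong refl arg_cong[where f="(*) _"] Gmat_column_eq_Qprob)
    finally show ?thesis by (simp add: sum_distrib_left mult_ac)
  qed
  have drift: "mu$j * (((\<Sum>k\<in>UNIV. P$j$k * (1 + Qprob P k i * s)) + p0 P j
        - (1 + Qprob P j i * s)) / (1 + Qprob P j i * s))
      = (if j = i then mu$i * s * (r - 1) / (1 + s) else 0)" for j
    unfolding affine_row_sum
    by (cases "j = i") (simp_all add: r_def Qprob_self Qprob_harmonic algebra_simps)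
  have "G \<noteq> 0" using G_r by auto
  then have r: "r - 1 = - 1 / G" using G_r by (simp add: field_simps)
  have "1 + s \<noteq> 0" using s by simp
  then have "G + G * s \<noteq> 0" using \<open>G \<noteq> 0\<close> by (metis mult.right_neutral distrib_left no_zero_divisors)
  have "RLam lam mu P Lam (\<chi> j. if j = i then ln (1 + s) else ln (1 + Qprob P j i * s))
      = s * (\<Sum>j\<in>UNIV. lam$j * Qprob P j i) + indicator Lam i * (mu$i * s * (r - 1) / (1 + s))"
    unfolding RLam_exp_form exp_hitting_solution[OF s] drift
    by (simp add: sum.delta indicator_def sum_distrib_left mult_ac)
  also have "\<dots> = s / G * (nu$i - mu$i / (1 + s) * indicator Lam i)"
    unfolding r nu_i using \<open>G \<noteq> 0\<close> \<open>1 + s \<noteq> 0\<close> \<open>G + G * s \<noteq> 0\<close>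
    by (simp add: field_simps)
  finally show ?thesis by (simp add: G_def)
qed

end

theorem lemma4p1:
  fixes lam mu nu :: "real^'n::finite" and P :: "real^'n^'n" and i :: 'n and s :: real
  assumes lam_nonneg: "\<forall>j. lam$j \<ge> 0"
    and mu_pos: "\<forall>j. mu$j > 0"
    and P_nonneg: "\<forall>j k. P$j$k \<ge> 0"
    and P_diag: "\<forall>j. P$j$j = 0"
    and P_sub: "\<forall>j. (\<Sum>k\<in>UNIV. P$j$k) \<le> 1"
    and A: "hypA lam mu P"
    and nu: "traffic nu lam P"
    and s: "s > -1"
  shows "(\<forall>a :: real^'n.
            (exp (a$i) = 1 + s \<and>
             (\<forall>j. j \<noteq> i \<longrightarrow> exp (a$j) = (\<Sum>k\<in>UNIV. P$j$k * exp (a$k)) + p0 P j))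
            \<longleftrightarrow> a = (\<chi> j. if j = i then ln (1 + s) else ln (1 + Qprob P j i * s)))
       \<and> (\<forall>Lam.
            RLam lam mu P Lam (\<chi> j. if j = i then ln (1 + s) else ln (1 + Qprob P j i * s))
            = s / (Gmat P)$i$i * (nu$i - mu$i / (1 + s) * indicator Lam i))"
proof -
  interpret transient_substochastic P
    using P_nonneg P_sub hypA_closed_class_empty[OF mu_pos A] by unfold_locales auto
  show ?thesis
    using hitting_system_solution_iff[OF s] RLam_at_hitting_solution[OF nu s] by blast
qed

end
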